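(* Let $G_0,G_1\in\mathbb{Z}$, let $(G_n)_{n\ge0}$ satisfy $G_n=G_{n-1}+G_{n-2}$ for $n\ge2$, and let $\mu = G_1^2 - G_0 G_1 - G_0^2$. For all $k\ge 1$, $$\mathcal{G}^2_{G_0,G_1}(k) = \begin{cases} \gcd\left(G_{k+1}^2 - G_1^2,\; G_{k+2}^2 - G_2^2\right), & \text{if $k$ is even},\\ \gcd\left(2 \mu,\; G_{k+1}^2 - G_1^2,\; G_{k+2}^2 - G_2^2\right), & \text{if $k$ is odd}.\end{cases}$$
   Context: $\mathcal{G}^2_{G_0,G_1}(k)=\gcd\{\sum_{i=1}^k G_{n+i}^2 : n\ge 0\}$ (nonnegative gcd of this infinite set of integers). *)

theory Defs
  imports Main
begin

definition sqsum_gcd :: "(nat \<Rightarrow> int) \<Rightarrow> nat \<Rightarrow> int" where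
  "sqsum_gcd G k = Gcd {(\<Sum>i=1..k. (G (n + i))^2) | n. True}"

end

theory Submission
  imports Defs
begin

text \<open>
  Write \<open>S n = G (n+1)\<^sup>2 + \<dots> + G (n+k)\<^sup>2\<close> and \<open>P m = G m G (m+1)\<close>. Since
  \<open>G (m+1)\<^sup>2 = P (m+1) - P m\<close>, the sum telescopes to \<open>S n = P (n+k) - P n\<close>. The products
  satisfy \<open>P (m+3) = 2 P (m+2) + 2 P (m+1) - P m\<close>, hence so does \<open>S\<close>, and the gcd of all
  \<open>S n\<close> is the gcd of \<open>S 0, S 1, S 2\<close>. The differences \<open>S 1 - S 0\<close> and \<open>S 2 - S 1\<close> are
  the two differences of squares in the theorem, and Cassini's identity gives
  \<open>S 0 = (S 2 - S 1) - 2 (S 1 - S 0) - (1 - (-1)\<^sup>k) \<mu>\<close>, whose last term is \<open>0\<close> for even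
  \<open>k\<close> and \<open>2 \<mu>\<close> for odd \<open>k\<close>.
\<close>

lemma Gcd_range_eq_gcd_initial3:
  fixes s :: "nat \<Rightarrow> 'a :: semiring_Gcd"
  assumes rec: "\<And>m. s (m + 3) = a * s (m + 2) + b * s (m + 1) + c * s m"
  shows "Gcd (range s) = gcd (s 0) (gcd (s 1) (s 2))"
proof (rule Gcd_eqI)
  define d where "d = gcd (s 0) (gcd (s 1) (s 2))"
  have "d dvd s m \<and> d dvd s (m + 1) \<and> d dvd s (m + 2)" for m
  proof (induction m)
    case 0
    show ?case
      unfolding d_def add_0 by (meson dvd_trans gcd_dvd1 gcd_dvd2)
  next
    case (Suc m)
    then have "d dvd s (m + 3)" by (simp add: rec)
    with Suc show ?case by (simp add: numeral_eq_Suc)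
  qed
  then show "d dvd x" if "x \<in> range s" for x
    using that by auto
next
  fix e assume "\<And>x. x \<in> range s \<Longrightarrow> e dvd x"
  then show "e dvd gcd (s 0) (gcd (s 1) (s 2))" by simp
qed simp

lemma gcd_partial_sums3:
  fixes a b c :: "'a :: ring_gcd"
  shows "gcd a (gcd (a + b) (a + b + c)) = gcd a (gcd b c)"
  by (simp add: gcd.assoc [symmetric])

lemma gcd_add_linear_combination:
  fixes x b c u v :: "'a :: ring_gcd"
  shows "gcd (x + u * b + v * c) (gcd b c) = gcd x (gcd b c)"
proof -
  obtain w where "u * b + v * c = w * gcd b c"
    by (metis dvd_add dvd_mult gcd_dvd1 gcd_dvd2 dvd_def mult.commute)
  then have "x + u * b + v * c = w * gcd b c + x"
    by (metis add.assoc add.commute)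
  then have "gcd (x + u * b + v * c) (gcd b c) = gcd (gcd b c) (w * gcd b c + x)"
    by (metis gcd.commute)
  also have "\<dots> = gcd x (gcd b c)"
    by (simp add: gcd_add_mult gcd.commute)
  finally show ?thesis .
qed

lemma sum_squares_fib_like:
  fixes G :: "nat \<Rightarrow> 'a :: comm_ring_1"
  assumes rec: "\<And>n. G (n + 2) = G (n + 1) + G n"
  shows "(\<Sum>i=1..k. (G (n + i))\<^sup>2) = G (n + k) * G (n + k + 1) - G n * G (n + 1)"
proof (induction k)
  case 0
  then show ?case by simp
next
  case (Suc k)
  have "G (n + k + 2) = G (n + k + 1) + G (n + k)"
    using rec[of "n + k"] by (simp add: add.assoc)
  with Suc show ?case
    by (simp add: power2_eq_square algebra_simps eval_nat_numeral)
qed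

lemma cassini_fib_like:
  fixes G :: "nat \<Rightarrow> 'a :: comm_ring_1"
  assumes rec: "\<And>n. G (n + 2) = G (n + 1) + G n"
  shows "(G (n + 1))\<^sup>2 - G n * G (n + 1) - (G n)\<^sup>2
    = (-1) ^ n * ((G 1)\<^sup>2 - G 0 * G 1 - (G 0)\<^sup>2)"
proof (induction n)
  case 0
  then show ?case by simp
next
  case (Suc n)
  with rec[of n] show ?case
    by (simp add: power2_eq_square algebra_simps eval_nat_numeral)
qed

lemma square_diff_fib_like:
  fixes G :: "nat \<Rightarrow> 'a :: comm_ring_1"
  assumes rec: "\<And>n. G (n + 2) = G (n + 1) + G n"
  shows "(G (n + 2))\<^sup>2 - 2 * (G (n + 1))\<^sup>2
    = G n * G (n + 1) - (-1) ^ n * ((G 1)\<^sup>2 - G 0 * G 1 - (G 0)\<^sup>2)"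
  using rec[of n] cassini_fib_like[OF rec, of n]
  by (simp add: power2_eq_square algebra_simps)

lemma consecutive_products_fib_like:
  fixes G :: "nat \<Rightarrow> 'a :: comm_ring_1"
  assumes rec: "\<And>n. G (n + 2) = G (n + 1) + G n"
  shows "G (m + 3) * G (m + 4)
    = 2 * (G (m + 2) * G (m + 3)) + 2 * (G (m + 1) * G (m + 2)) - G m * G (m + 1)"
proof -
  have "G (m + 3) = G (m + 2) + G (m + 1)" "G (m + 4) = G (m + 3) + G (m + 2)"
    using rec[of "m + 1"] rec[of "m + 2"] by (simp_all add: add.assoc eval_nat_numeral)
  with rec[of m] show ?thesis by (simp add: algebra_simps)
qed

theorem theorem3p11:
  fixes G :: "nat \<Rightarrow> int" and k :: nat
  assumes rec: "\<And>n. n \<ge> 2 \<Longrightarrow> G n = G (n - 1) + G (n - 2)"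
    and k: "k \<ge> 1"
  defines "\<mu> \<equiv> (G 1)^2 - G 0 * G 1 - (G 0)^2"
  shows "sqsum_gcd G k =
    (if even k then gcd ((G (k+1))^2 - (G 1)^2) ((G (k+2))^2 - (G 2)^2)
     else gcd (2 * \<mu>) (gcd ((G (k+1))^2 - (G 1)^2) ((G (k+2))^2 - (G 2)^2)))"
proof -
  have fib: "G (n + 2) = G (n + 1) + G n" for n
    using rec[of "n + 2"] by simp
  define S where "S n = (\<Sum>i=1..k. (G (n + i))\<^sup>2)" for n
  define D0 where "D0 = (G (k + 1))\<^sup>2 - (G 1)\<^sup>2"
  define D1 where "D1 = (G (k + 2))\<^sup>2 - (G 2)\<^sup>2"
  define e where "e = (1 - (-1) ^ k) * \<mu>"
  have S_closed: "S n = G (n + k) * G (n + k + 1) - G n * G (n + 1)" for n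
    unfolding S_def by (rule sum_squares_fib_like[OF fib])
  have S_rec: "S (m + 3) = 2 * S (m + 2) + 2 * S (m + 1) + (-1) * S m" for m
    using consecutive_products_fib_like[OF fib, of m] consecutive_products_fib_like[OF fib, of "m + k"]
    by (simp add: S_closed algebra_simps eval_nat_numeral)
  have S_step: "S (n + 1) = S n + ((G (n + k + 1))\<^sup>2 - (G (n + 1))\<^sup>2)" for n
    using fib[of n] fib[of "n + k"] by (simp add: S_closed power2_eq_square algebra_simps)
  have S1: "S 1 = S 0 + D0"
    using S_step[of 0] by (simp add: D0_def)
  have S2: "S 2 = S 0 + D0 + D1"
    using S_step[of 1] S1 by (simp add: D1_def numeral_2_eq_2 add.commute)
  have S0: "S 0 = D1 - 2 * D0 - e"
    using square_diff_fib_like[OF fib, of k] square_diff_fib_like[OF fib, of 0]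
    by (simp add: S_closed D0_def D1_def e_def \<mu>_def numeral_2_eq_2 algebra_simps)
  have "sqsum_gcd G k = Gcd (range S)"
    by (simp add: sqsum_gcd_def S_def full_SetCompr_eq)
  also have "\<dots> = gcd (S 0) (gcd (S 1) (S 2))"
    using S_rec by (rule Gcd_range_eq_gcd_initial3)
  also have "\<dots> = gcd (S 0) (gcd D0 D1)"
    unfolding S1 S2 by (rule gcd_partial_sums3)
  also have "\<dots> = gcd e (gcd D0 D1)"
    using gcd_add_linear_combination[of "- e" "- 2" D0 1 D1] by (simp add: S0 algebra_simps)
  finally show ?thesis
    by (simp add: e_def D0_def D1_def)
qed

end
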